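(* Let $q \geq 5$ be a prime power and let $\mathcal{X}$ be a plane curve of degree $q-1$ defined over $\mathbb{F}_q$ without $\mathbb{F}_q$-linear components with $\mathrm{N}_q(\mathcal{X}) = (q-1)^2$. Fix a point $Q_0 \in Z(\mathcal{X})$ and an $\mathbb{F}_q$-line $l_\infty$ not passing through $Q_0$. Suppose there are $\mathbb{F}_q$-lines $l_1, \dots, l_t$ through $Q_0$, with $2 \le t \le q-1$, such that $l_i(\mathbb{F}_q) \setminus (\{Q_0\} \cup l_\infty) \subseteq \mathcal{X}(\mathbb{F}_q)$ for $i=1,\dots,t$. Let $l$ be an $\mathbb{F}_q$-line through $Q_0$ different from $l_1,\dots,l_t$. If $\#\big((l \setminus l_\infty)(\mathbb{F}_q) \cap \mathcal{X}(\mathbb{F}_q)\big) \geq q - t$, then $l(\mathbb{F}_q) \setminus (\{Q_0\} \cup l_\infty(\mathbb{F}_q)) \subseteq \mathcal{X}(\mathbb{F}_q)$.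
   Context: $\mathcal{X}(\mathbb{F}_q)=\mathcal{X}\cap\mathbb{P}^2(\mathbb{F}_q)$, $\mathrm{N}_q(\mathcal{X})=\#\mathcal{X}(\mathbb{F}_q)$; "without $\mathbb{F}_q$-linear components" means no line defined over $\mathbb{F}_q$ is a component. $Z(\mathcal{X}) := \mathbb{P}^2(\mathbb{F}_q) \setminus \mathcal{X}(\mathbb{F}_q)$. For a line $l$, $l(\mathbb{F}_q)$ is its set of $\mathbb{F}_q$-rational points. *)

theory Defs
  imports Main
begin

(* A homogeneous polynomial of degree d in X,Y,Z over a field 'a is represented by
   its coefficient function F, where F i j is the coefficient of X^i Y^j Z^(d-i-j)
   (only the values with i + j <= d are relevant). *)

definition hom_eval :: "nat \<Rightarrow> (nat \<Rightarrow> nat \<Rightarrow> 'a::field) \<Rightarrow> 'a \<times> 'a \<times> 'a \<Rightarrow> 'a" where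
  "hom_eval d F v = (case v of (x, y, z) \<Rightarrow>
     (\<Sum>i\<le>d. \<Sum>j\<le>d - i. F i j * x ^ i * y ^ j * z ^ (d - i - j)))"

definition hom_nonzero :: "nat \<Rightarrow> (nat \<Rightarrow> nat \<Rightarrow> 'a::field) \<Rightarrow> bool" where
  "hom_nonzero d F \<longleftrightarrow> (\<exists>i j. i + j \<le> d \<and> F i j \<noteq> 0)"

(* coefficient of X^i Y^j Z^(d-i-j) in (aX + bY + cZ) * G, G homogeneous of degree d-1 *)
definition lin_times :: "nat \<Rightarrow> 'a::field \<Rightarrow> 'a \<Rightarrow> 'a \<Rightarrow> (nat \<Rightarrow> nat \<Rightarrow> 'a) \<Rightarrow> nat \<Rightarrow> nat \<Rightarrow> 'a" where
  "lin_times d a b c G i j =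
     (if 0 < i then a * G (i - 1) j else 0) +
     (if 0 < j then b * G i (j - 1) else 0) +
     (if i + j \<le> d - 1 then c * G i j else 0)"

definition has_linear_component :: "nat \<Rightarrow> (nat \<Rightarrow> nat \<Rightarrow> 'a::field) \<Rightarrow> bool" where
  "has_linear_component d F \<longleftrightarrow> 1 \<le> d \<and>
     (\<exists>a b c G. (a, b, c) \<noteq> (0, 0, 0) \<and>
        (\<forall>i j. i + j \<le> d \<longrightarrow> F i j = lin_times d a b c G i j))"

definition proj_pt :: "'a::field \<times> 'a \<times> 'a \<Rightarrow> ('a \<times> 'a \<times> 'a) set" where
  "proj_pt v = (case v of (x, y, z) \<Rightarrow> {(c * x, c * y, c * z) | c. c \<noteq> 0})"

definition P2 :: "('a::field \<times> 'a \<times> 'a) set set" where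
  "P2 = proj_pt ` {v. v \<noteq> (0, 0, 0)}"

definition curve_pts :: "nat \<Rightarrow> (nat \<Rightarrow> nat \<Rightarrow> 'a::field) \<Rightarrow> ('a \<times> 'a \<times> 'a) set set" where
  "curve_pts d F = {proj_pt v | v. v \<noteq> (0, 0, 0) \<and> hom_eval d F v = 0}"

definition line_pts :: "'a::field \<Rightarrow> 'a \<Rightarrow> 'a \<Rightarrow> ('a \<times> 'a \<times> 'a) set set" where
  "line_pts a b c = {proj_pt (x, y, z) | x y z. (x, y, z) \<noteq> (0, 0, 0) \<and> a * x + b * y + c * z = 0}"

definition is_fq_line :: "('a::field \<times> 'a \<times> 'a) set set \<Rightarrow> bool" where
  "is_fq_line l \<longleftrightarrow> (\<exists>a b c. (a, b, c) \<noteq> (0, 0, 0) \<and> l = line_pts a b c)"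

end

theory Submission
  imports Defs "HOL-Library.Product_Plus" "HOL-Library.Cardinality" "HOL-Computational_Algebra.Polynomial"
begin

text \<open>
  Write \<open>Q0 = [w]\<close> and let \<open>r\<close> be the point of \<open>l\<close> on \<open>l\<^sub>\<infinity>\<close> and \<open>u\<close> that of \<open>l\<^sub>1\<close>;
  the affine points of the line through \<open>Q0\<close> in direction \<open>v\<close> are \<open>[w + m v]\<close>, \<open>m \<noteq> 0\<close>.
  Along the pencil of directions \<open>u + b r\<close> one has \<open>F(w + m(u + b r)) = \<Sum>\<^sub>k c\<^sub>k(b) m\<^sup>k\<close> with
  \<open>deg c\<^sub>k \<le> k\<close>.  As \<open>m\<^sup>q\<^sup>-\<^sup>1 = 1\<close> on \<open>\<bbbF>\<^sub>q\<^sup>*\<close>, a line whose affine part lies on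
  the curve forces \<open>c\<^sub>k(b) = 0\<close> for \<open>0 < k < q - 1\<close>; the lines \<open>l\<^sub>i\<close> give \<open>t\<close> distinct
  roots \<open>b\<close>, hence \<open>c\<^sub>k = 0\<close> for \<open>0 < k < t\<close>.  Exchanging the roles of \<open>u\<close> and \<open>r\<close>
  (the reversed polynomials \<open>b\<^sup>k c\<^sub>k(1/b)\<close>) the same holds for the coefficients of
  \<open>F(w + m r)\<close>, which on \<open>\<bbbF>\<^sub>q\<^sup>*\<close> is therefore \<open>m\<^sup>t g(m)\<close> with \<open>deg g \<le> q - 1 - t\<close>.
  By hypothesis \<open>g\<close> has at least \<open>q - t\<close> roots, so \<open>g = 0\<close>.
\<close>

section \<open>Vectors in \<open>'a\<^sup>3\<close>\<close>

type_synonym 'a vec3 = "'a \<times> 'a \<times> 'a"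

fun dot3 :: "'a::field vec3 \<Rightarrow> 'a vec3 \<Rightarrow> 'a" where
  "dot3 (a, b, c) (x, y, z) = a * x + b * y + c * z"

fun cross3 :: "'a::field vec3 \<Rightarrow> 'a vec3 \<Rightarrow> 'a vec3" where
  "cross3 (a, b, c) (x, y, z) = (b * z - c * y, c * x - a * z, a * y - b * x)"

fun scale3 :: "'a::field \<Rightarrow> 'a vec3 \<Rightarrow> 'a vec3" where
  "scale3 s (x, y, z) = (s * x, s * y, s * z)"

lemma zero_vec3: "(0 :: 'a::zero vec3) = (0, 0, 0)"
  by (simp add: zero_prod_def)

lemma vec3_eq_0_iff [simp]: "(x, y, z) = (0 :: 'a::zero vec3) \<longleftrightarrow> x = 0 \<and> y = 0 \<and> z = 0"
  by (simp add: zero_prod_def)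

lemma scale3_eq_0_iff [simp]: "scale3 s x = 0 \<longleftrightarrow> s = 0 \<or> x = 0"
  by (cases x) auto

lemma scale3_scale3 [simp]: "scale3 a (scale3 b x) = scale3 (a * b) x"
  by (cases x) (simp add: mult.assoc)

lemma scale3_one [simp]: "scale3 1 x = x"
  by (cases x) simp

lemma scale3_zero [simp]: "scale3 0 x = 0"
  by (cases x) simp

lemma scale3_add_right: "scale3 s (x + y) = scale3 s x + scale3 s y"
  by (cases x; cases y) (simp add: algebra_simps)

lemma dot3_commute: "dot3 x y = dot3 y x"
  by (cases x; cases y) (simp add: algebra_simps)

lemma dot3_zero_right [simp]: "dot3 n 0 = 0"
  by (cases n) (simp add: zero_prod_def)

lemma dot3_add_right [simp]: "dot3 n (x + y) = dot3 n x + dot3 n y"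
  by (cases n; cases x; cases y) (simp add: algebra_simps)

lemma dot3_scale3_right [simp]: "dot3 n (scale3 s x) = s * dot3 n x"
  by (cases n; cases x) (simp add: algebra_simps)

lemma dot3_scale3_left [simp]: "dot3 (scale3 s n) x = s * dot3 n x"
  by (cases n; cases x) (simp add: algebra_simps)

lemma dot3_cross3_left [simp]: "dot3 a (cross3 a b) = 0"
  by (cases a; cases b) (simp add: algebra_simps)

lemma dot3_cross3_right [simp]: "dot3 b (cross3 a b) = 0"
  by (cases a; cases b) (simp add: algebra_simps)

lemma cross3_scale3_right: "cross3 a (scale3 s b) = scale3 s (cross3 a b)"
  by (cases a; cases b) (simp add: algebra_simps)

lemma cross3_scale3_self [simp]: "cross3 (scale3 s a) a = 0"
  by (cases a) (simp add: algebra_simps)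

lemma cross3_cross3: "cross3 x (cross3 a b) = scale3 (dot3 b x) a - scale3 (dot3 a x) b"
  by (cases x; cases a; cases b) (simp add: algebra_simps)

lemma cramer3:
  "scale3 (dot3 w (cross3 a b)) x =
     scale3 (dot3 x (cross3 a b)) w + scale3 (dot3 x (cross3 b w)) a + scale3 (dot3 x (cross3 w a)) b"
  by (cases x; cases w; cases a; cases b) (simp add: algebra_simps)

lemma add_scale3_neq_0:
  assumes "dot3 L w \<noteq> 0" and "dot3 L d = 0"
  shows "w + scale3 m d \<noteq> 0"
proof
  assume "w + scale3 m d = 0"
  then have "dot3 L (w + scale3 m d) = 0"
    by simp
  with assms show False
    by simp
qed

lemma parallel_if_cross3_eq_0:
  assumes "n \<noteq> 0" and "cross3 x n = 0"
  shows "\<exists>s. x = scale3 s n"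
proof -
  obtain x1 x2 x3 n1 n2 n3 where x: "x = (x1, x2, x3)" and n: "n = (n1, n2, n3)"
    by (cases x, cases n)
  have e: "x2 * n3 = x3 * n2" "x3 * n1 = x1 * n3" "x1 * n2 = x2 * n1"
    using assms(2) by (auto simp: x n)
  consider "n1 \<noteq> 0" | "n2 \<noteq> 0" | "n3 \<noteq> 0"
    using assms(1) n by auto
  then show ?thesis
  proof cases
    case 1
    with e show ?thesis by (intro exI[of _ "x1 / n1"]) (auto simp: x n field_simps)
  next
    case 2
    with e show ?thesis by (intro exI[of _ "x2 / n2"]) (auto simp: x n field_simps)
  next
    case 3
    with e show ?thesis by (intro exI[of _ "x3 / n3"]) (auto simp: x n field_simps)
  qed
qed

lemma cross3_neq_0:
  assumes "dot3 v a \<noteq> 0" and "dot3 v b = 0" and "b \<noteq> 0"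
  shows "cross3 a b \<noteq> 0"
proof
  assume "cross3 a b = 0"
  then obtain s where "a = scale3 s b"
    using parallel_if_cross3_eq_0[OF assms(3)] by blast
  with assms(1,2) show False by simp
qed

lemma parallel_cross3_if_orthogonal:
  assumes "dot3 n a = 0" and "dot3 n b = 0" and "cross3 a b \<noteq> 0"
  shows "\<exists>s. n = scale3 s (cross3 a b)"
proof (rule parallel_if_cross3_eq_0[OF assms(3)])
  show "cross3 n (cross3 a b) = 0"
    using assms(1,2) by (simp add: cross3_cross3 dot3_commute[of _ n])
qed

lemma in_span_if_orthogonal_cross3:
  assumes "cross3 a b \<noteq> 0" and "dot3 x (cross3 a b) = 0"
  shows "\<exists>\<alpha> \<beta>. x = scale3 \<alpha> a + scale3 \<beta> b"
proof -
  obtain w where w: "dot3 w (cross3 a b) \<noteq> 0"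
  proof (cases "cross3 a b")
    case (fields c1 c2 c3)
    then show ?thesis
      using assms(1) that[of "if c1 \<noteq> 0 then (1, 0, 0) else if c2 \<noteq> 0 then (0, 1, 0) else (0, 0, 1)"]
      by auto
  qed
  let ?D = "dot3 w (cross3 a b)"
  have cramer: "scale3 ?D x = scale3 (dot3 x (cross3 b w)) a + scale3 (dot3 x (cross3 w a)) b"
    using cramer3[of w a b x] assms(2) by simp
  have "x = scale3 (1 / ?D) (scale3 ?D x)"
    using w by simp
  also have "\<dots> = scale3 (dot3 x (cross3 b w) / ?D) a + scale3 (dot3 x (cross3 w a) / ?D) b"
    unfolding cramer by (simp add: scale3_add_right)
  finally show ?thesis
    by blast
qed

section \<open>Points, lines and curves of the projective plane\<close>

fun line_of :: "'a::field vec3 \<Rightarrow> 'a vec3 set set" where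
  "line_of (a, b, c) = line_pts a b c"

lemma mem_proj_pt_iff: "x \<in> proj_pt v \<longleftrightarrow> (\<exists>c. c \<noteq> 0 \<and> x = scale3 c v)"
  by (cases v; cases x) (auto simp: proj_pt_def)

lemma proj_pt_eqD:
  assumes "proj_pt v = proj_pt v'"
  shows "\<exists>c. c \<noteq> 0 \<and> v = scale3 c v'"
proof -
  have "v \<in> proj_pt v"
    unfolding mem_proj_pt_iff by (intro exI[of _ 1]) simp
  then show ?thesis
    using assms by (simp add: mem_proj_pt_iff)
qed

lemma proj_pt_scale3:
  assumes "c \<noteq> 0"
  shows "proj_pt (scale3 c v) = proj_pt v"
proof (intro set_eqI iffI)
  fix x
  assume "x \<in> proj_pt (scale3 c v)"
  then obtain e where "e \<noteq> 0" "x = scale3 (e * c) v"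
    by (auto simp: mem_proj_pt_iff)
  with assms show "x \<in> proj_pt v"
    unfolding mem_proj_pt_iff by (intro exI[of _ "e * c"]) simp
next
  fix x
  assume "x \<in> proj_pt v"
  then obtain e where "e \<noteq> 0" "x = scale3 e v"
    by (auto simp: mem_proj_pt_iff)
  with assms show "x \<in> proj_pt (scale3 c v)"
    unfolding mem_proj_pt_iff by (intro exI[of _ "e / c"]) simp
qed

lemma P2_elemE:
  assumes "Q \<in> P2"
  obtains w where "w \<noteq> 0" and "Q = proj_pt w"
  using assms by (auto simp: P2_def zero_vec3)

lemma is_fq_line_iff: "is_fq_line l \<longleftrightarrow> (\<exists>n. n \<noteq> 0 \<and> l = line_of n)"
  unfolding is_fq_line_def by auto

lemma line_of_elemE:
  assumes "P \<in> line_of n"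
  obtains v where "v \<noteq> 0" and "P = proj_pt v" and "dot3 n v = 0"
proof -
  obtain a b c where "n = (a, b, c)"
    by (cases n)
  with assms obtain x y z where "(x, y, z) \<noteq> (0, 0, 0)" "P = proj_pt (x, y, z)" "a * x + b * y + c * z = 0"
    by (auto simp: line_pts_def)
  with \<open>n = (a, b, c)\<close> show thesis
    using that[of "(x, y, z)"] by (simp add: zero_vec3)
qed

lemma proj_pt_in_line_of_iff:
  assumes "v \<noteq> 0"
  shows "proj_pt v \<in> line_of n \<longleftrightarrow> dot3 n v = 0"
proof
  assume "proj_pt v \<in> line_of n"
  then obtain v' where "proj_pt v = proj_pt v'" and "dot3 n v' = 0"
    by (rule line_of_elemE)
  then obtain c where "v = scale3 c v'"
    using proj_pt_eqD by blast
  with \<open>dot3 n v' = 0\<close> show "dot3 n v = 0"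
    by simp
next
  assume "dot3 n v = 0"
  then show "proj_pt v \<in> line_of n"
    using assms by (cases n; cases v) (simp add: line_pts_def zero_vec3, blast)
qed

lemma line_of_scale3:
  assumes "c \<noteq> 0"
  shows "line_of (scale3 c n) = line_of n"
proof -
  obtain a b e where n: "n = (a, b, e)"
    by (cases n)
  have "c * a * x + c * b * y + c * e * z = c * (a * x + b * y + e * z)" for x y z
    by (simp add: algebra_simps)
  with assms have "c * a * x + c * b * y + c * e * z = 0 \<longleftrightarrow> a * x + b * y + e * z = 0" for x y z
    by simp
  then show ?thesis
    by (simp add: n line_pts_def)
qed

lemma hom_eval_scale3: "hom_eval d F (scale3 c v) = c ^ d * hom_eval d F v"
proof -
  obtain x y z where v: "v = (x, y, z)"
    by (cases v)
  have monomial: "F i j * (c * x) ^ i * (c * y) ^ j * (c * z) ^ (d - i - j) =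
      c ^ d * (F i j * x ^ i * y ^ j * z ^ (d - i - j))" if "i \<le> d" "j \<le> d - i" for i j
  proof -
    have "c ^ d = c ^ i * c ^ j * c ^ (d - i - j)"
      using that by (simp flip: power_add)
    then show ?thesis
      by (simp add: power_mult_distrib mult_ac)
  qed
  have "hom_eval d F (scale3 c v) =
      (\<Sum>i\<le>d. \<Sum>j\<le>d - i. c ^ d * (F i j * x ^ i * y ^ j * z ^ (d - i - j)))"
    unfolding v hom_eval_def scale3.simps prod.case
    by (intro sum.cong refl) (rule monomial; simp)
  then show ?thesis
    by (simp add: v hom_eval_def sum_distrib_left)
qed

lemma proj_pt_in_curve_pts_iff:
  assumes "v \<noteq> 0"
  shows "proj_pt v \<in> curve_pts d F \<longleftrightarrow> hom_eval d F v = 0"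
proof
  assume "proj_pt v \<in> curve_pts d F"
  then obtain v' where "proj_pt v = proj_pt v'" "hom_eval d F v' = 0"
    by (auto simp: curve_pts_def)
  then obtain c where "v = scale3 c v'"
    using proj_pt_eqD by blast
  with \<open>hom_eval d F v' = 0\<close> show "hom_eval d F v = 0"
    by (simp add: hom_eval_scale3)
next
  assume "hom_eval d F v = 0"
  then show "proj_pt v \<in> curve_pts d F"
    using assms unfolding curve_pts_def zero_vec3 by blast
qed

lemma point_off_lineE:
  assumes "Q \<in> P2" and "is_fq_line l" and "Q \<notin> l"
  obtains w L where "w \<noteq> 0" and "Q = proj_pt w" and "l = line_of L" and "dot3 L w \<noteq> 0"
proof -
  obtain w where "w \<noteq> 0" and "Q = proj_pt w"
    using assms(1) by (rule P2_elemE)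
  moreover obtain L where "l = line_of L"
    using assms(2) is_fq_line_iff by blast
  moreover from calculation assms(3) have "dot3 L w \<noteq> 0"
    by (simp add: proj_pt_in_line_of_iff)
  ultimately show thesis
    by (rule that)
qed

lemma line_of_eq_cross3:
  assumes "n \<noteq> 0" and "dot3 n a = 0" and "dot3 n b = 0" and "cross3 a b \<noteq> 0"
  shows "line_of n = line_of (cross3 a b)"
proof -
  obtain s where s: "n = scale3 s (cross3 a b)"
    using parallel_cross3_if_orthogonal[OF assms(2-4)] by blast
  with assms(1) have "s \<noteq> 0"
    by auto
  with s show ?thesis
    by (simp add: line_of_scale3)
qed

lemma line_through_pointE:
  assumes "is_fq_line l" and "proj_pt w \<in> l" and "w \<noteq> 0" and "dot3 L w \<noteq> 0"
  obtains d where "d \<noteq> 0" and "dot3 L d = 0" and "l = line_of (cross3 w d)"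
proof -
  obtain n where n: "n \<noteq> 0" "l = line_of n"
    using assms(1) is_fq_line_iff by blast
  with assms(2,3) have "dot3 n w = 0"
    by (simp add: proj_pt_in_line_of_iff)
  define d where "d = cross3 L n"
  have "d \<noteq> 0"
    unfolding d_def using assms(4) \<open>dot3 n w = 0\<close> n(1)
    by (intro cross3_neq_0[of w]) (simp_all add: dot3_commute[of w])
  moreover have "dot3 L d = 0"
    by (simp add: d_def)
  moreover have "cross3 w d \<noteq> 0"
    using assms(4) \<open>dot3 L d = 0\<close> \<open>d \<noteq> 0\<close> by (rule cross3_neq_0)
  then have "l = line_of (cross3 w d)"
    using n \<open>dot3 n w = 0\<close> by (simp add: d_def line_of_eq_cross3)
  ultimately show thesis
    by (rule that)
qed

lemma other_line_through_pointE:
  assumes "is_fq_line l'" and "proj_pt w \<in> l'" and "w \<noteq> 0" and "dot3 L w \<noteq> 0"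
    and "r \<noteq> 0" and "l' \<noteq> line_of (cross3 w r)"
  obtains u where "dot3 L u = 0" and "cross3 u r \<noteq> 0"
proof -
  obtain u where u: "u \<noteq> 0" "dot3 L u = 0" "l' = line_of (cross3 w u)"
    using assms(1-4) by (rule line_through_pointE)
  have "cross3 u r \<noteq> 0"
  proof
    assume "cross3 u r = 0"
    then obtain s where "u = scale3 s r"
      using parallel_if_cross3_eq_0 assms(5) by blast
    with u(1,3) assms(6) show False
      by (simp add: cross3_scale3_right line_of_scale3)
  qed
  with u(2) show thesis
    by (rule that)
qed

lemma affine_part_of_line:
  assumes "dot3 L w \<noteq> 0" and "dot3 L d = 0" and "d \<noteq> 0"
  shows "line_of (cross3 w d) - ({proj_pt w} \<union> line_of L) = (\<lambda>m. proj_pt (w + scale3 m d)) ` (- {0})"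
proof (intro set_eqI iffI)
  fix P
  assume P: "P \<in> line_of (cross3 w d) - ({proj_pt w} \<union> line_of L)"
  then have "P \<in> line_of (cross3 w d)"
    by simp
  then obtain v where v: "v \<noteq> 0" "P = proj_pt v" "dot3 (cross3 w d) v = 0"
    by (rule line_of_elemE)
  have "cross3 w d \<noteq> 0"
    using assms by (rule cross3_neq_0)
  moreover have "dot3 v (cross3 w d) = 0"
    using v(3) by (simp add: dot3_commute)
  ultimately obtain \<alpha> \<beta> where v_eq: "v = scale3 \<alpha> w + scale3 \<beta> d"
    using in_span_if_orthogonal_cross3 by blast
  have "dot3 L v \<noteq> 0"
    using P v(1,2) by (simp add: proj_pt_in_line_of_iff)
  with assms(2) have "\<alpha> \<noteq> 0"
    by (auto simp: v_eq)
  have "\<beta> \<noteq> 0"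
    using P v(2) \<open>\<alpha> \<noteq> 0\<close> by (auto simp: v_eq proj_pt_scale3)
  have "v = scale3 \<alpha> (w + scale3 (\<beta> / \<alpha>) d)"
    using \<open>\<alpha> \<noteq> 0\<close> by (simp add: v_eq scale3_add_right)
  with v(2) \<open>\<alpha> \<noteq> 0\<close> \<open>\<beta> \<noteq> 0\<close> show "P \<in> (\<lambda>m. proj_pt (w + scale3 m d)) ` (- {0})"
    by (auto simp: proj_pt_scale3)
next
  fix P
  assume "P \<in> (\<lambda>m. proj_pt (w + scale3 m d)) ` (- {0})"
  then obtain m where m: "m \<noteq> 0" "P = proj_pt (w + scale3 m d)"
    by auto
  let ?v = "w + scale3 m d"
  have L_v: "dot3 L ?v = dot3 L w"
    using assms(2) by simp
  have "?v \<noteq> 0"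
    using assms(1,2) by (rule add_scale3_neq_0)
  have "P \<noteq> proj_pt w"
  proof
    assume "P = proj_pt w"
    then obtain c where c: "?v = scale3 c w"
      using m(2) proj_pt_eqD by metis
    then have "dot3 L w = c * dot3 L w"
      using L_v by simp
    with assms(1) have "c = 1"
      by simp
    with c m(1) assms(3) show False
      by simp
  qed
  with \<open>?v \<noteq> 0\<close> m(2) L_v assms(1,2) show "P \<in> line_of (cross3 w d) - ({proj_pt w} \<union> line_of L)"
    by (simp add: proj_pt_in_line_of_iff dot3_commute[of "cross3 w d"])
qed

lemma line_through_point_cases:
  assumes "dot3 L w \<noteq> 0" and "dot3 L u = 0" and "dot3 L r = 0" and "cross3 u r \<noteq> 0"
    and "dot3 L d = 0" and "d \<noteq> 0"
  shows "line_of (cross3 w d) = line_of (cross3 w r) \<or>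
    (\<exists>b. line_of (cross3 w d) = line_of (cross3 w (u + scale3 b r)))"
proof -
  obtain s where s: "L = scale3 s (cross3 u r)"
    using parallel_cross3_if_orthogonal assms(2-4) by blast
  with assms(1) have "s \<noteq> 0"
    by auto
  with s assms(5) have "dot3 d (cross3 u r) = 0"
    by (simp add: dot3_commute)
  then obtain \<alpha> \<beta> where d: "d = scale3 \<alpha> u + scale3 \<beta> r"
    using in_span_if_orthogonal_cross3 assms(4) by blast
  show ?thesis
  proof (cases "\<alpha> = 0")
    case True
    with d assms(6) have "\<beta> \<noteq> 0"
      by auto
    with d True show ?thesis
      by (simp add: cross3_scale3_right line_of_scale3)
  next
    case False
    then have "d = scale3 \<alpha> (u + scale3 (\<beta> / \<alpha>) r)"
      by (simp add: d scale3_add_right)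
    with False show ?thesis
      by (auto simp: cross3_scale3_right line_of_scale3)
  qed
qed

lemma affine_part_of_line_subset_curve_iff:
  assumes "dot3 L w \<noteq> 0" and "dot3 L d = 0" and "d \<noteq> 0"
  shows "line_of (cross3 w d) - ({proj_pt w} \<union> line_of L) \<subseteq> curve_pts e F \<longleftrightarrow>
    (\<forall>m. m \<noteq> 0 \<longrightarrow> hom_eval e F (w + scale3 m d) = 0)"
  unfolding affine_part_of_line[OF assms]
  using add_scale3_neq_0[OF assms(1,2)] by (auto simp: proj_pt_in_curve_pts_iff)

lemma card_affine_curve_points_on_line_le:
  fixes F :: "nat \<Rightarrow> nat \<Rightarrow> 'a::{finite, field}"
  assumes "dot3 L w \<noteq> 0" and "dot3 L d = 0" and "d \<noteq> 0" and "proj_pt w \<notin> curve_pts e F"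
  shows "card ((line_of (cross3 w d) - line_of L) \<inter> curve_pts e F) \<le>
    card {m. m \<noteq> 0 \<and> hom_eval e F (w + scale3 m d) = 0}"
proof -
  let ?R = "{m. m \<noteq> 0 \<and> hom_eval e F (w + scale3 m d) = 0}"
  have "(line_of (cross3 w d) - line_of L) \<inter> curve_pts e F \<subseteq> (\<lambda>m. proj_pt (w + scale3 m d)) ` ?R"
  proof
    fix P
    assume P: "P \<in> (line_of (cross3 w d) - line_of L) \<inter> curve_pts e F"
    with assms(4) have "P \<in> line_of (cross3 w d) - ({proj_pt w} \<union> line_of L)"
      by auto
    then obtain m where m: "m \<noteq> 0" "P = proj_pt (w + scale3 m d)"
      unfolding affine_part_of_line[OF assms(1-3)] by auto
    with P m add_scale3_neq_0[OF assms(1,2)] show "P \<in> (\<lambda>m. proj_pt (w + scale3 m d)) ` ?R"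
      by (auto simp: proj_pt_in_curve_pts_iff)
  qed
  then have "card ((line_of (cross3 w d) - line_of L) \<inter> curve_pts e F) \<le>
      card ((\<lambda>m. proj_pt (w + scale3 m d)) ` ?R)"
    by (intro card_mono) auto
  also have "\<dots> \<le> card ?R"
    by (rule card_image_le) simp
  finally show ?thesis .
qed

lemma card_lines_through_point_le:
  fixes F :: "nat \<Rightarrow> nat \<Rightarrow> 'a::{finite, field}"
  assumes "w \<noteq> 0" and "dot3 L w \<noteq> 0" and "dot3 L u = 0" and "dot3 L r = 0" and "cross3 u r \<noteq> 0"
    and Ls: "\<forall>l\<in>Ls. is_fq_line l \<and> proj_pt w \<in> l \<and> l - ({proj_pt w} \<union> line_of L) \<subseteq> curve_pts e F"
    and "line_of (cross3 w r) \<notin> Ls"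
  shows "card Ls \<le> card {b. \<forall>m. m \<noteq> 0 \<longrightarrow> hom_eval e F (w + scale3 m (u + scale3 b r)) = 0}"
proof -
  let ?B = "{b. \<forall>m. m \<noteq> 0 \<longrightarrow> hom_eval e F (w + scale3 m (u + scale3 b r)) = 0}"
  have "Ls \<subseteq> (\<lambda>b. line_of (cross3 w (u + scale3 b r))) ` ?B"
  proof
    fix l
    assume "l \<in> Ls"
    with Ls assms(1,2) obtain d where d: "d \<noteq> 0" "dot3 L d = 0" "l = line_of (cross3 w d)"
      using line_through_pointE by metis
    with \<open>l \<in> Ls\<close> assms(7) obtain b where b: "l = line_of (cross3 w (u + scale3 b r))"
      using line_through_point_cases[OF assms(2-5) d(2,1)] by auto
    have "dot3 L (u + scale3 b r) = 0"
      using assms(3,4) by simp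
    moreover have "u + scale3 b r \<noteq> 0"
    proof
      assume "u + scale3 b r = 0"
      then have "u = scale3 (- b) r"
        by (cases u; cases r) (simp add: eq_neg_iff_add_eq_0)
      with assms(5) show False
        by simp
    qed
    moreover have "line_of (cross3 w (u + scale3 b r)) - ({proj_pt w} \<union> line_of L) \<subseteq> curve_pts e F"
      using Ls \<open>l \<in> Ls\<close> b by blast
    ultimately have "b \<in> ?B"
      using affine_part_of_line_subset_curve_iff[OF assms(2)] by blast
    with b show "l \<in> (\<lambda>b. line_of (cross3 w (u + scale3 b r))) ` ?B"
      by blast
  qed
  then have "card Ls \<le> card ((\<lambda>b. line_of (cross3 w (u + scale3 b r))) ` ?B)"
    by (intro card_mono) auto
  also have "\<dots> \<le> card ?B"
    by (rule card_image_le) simp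
  finally show ?thesis .
qed

section \<open>Polynomials over a finite field\<close>

lemma nonzero_pow_card_minus_one:
  fixes x :: "'a::{finite, field}"
  assumes "x \<noteq> 0"
  shows "x ^ (CARD('a) - 1) = 1"
proof -
  let ?U = "UNIV - {0 :: 'a}"
  have "(\<Prod>y\<in>?U. y) = (\<Prod>y\<in>?U. x * y)"
    by (rule prod.reindex_bij_witness[of _ "\<lambda>y. x * y" "\<lambda>y. y / x"]) (use assms in auto)
  also have "\<dots> = x ^ card ?U * (\<Prod>y\<in>?U. y)"
    by (simp add: prod.distrib)
  finally have "x ^ card ?U = 1"
    by simp
  then show ?thesis
    by (simp add: card_Diff_subset)
qed

lemma two_le_card_field: "2 \<le> CARD('a::{finite, field})"
  using card_mono[of UNIV "{0, 1 :: 'a}"] by simp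

lemma sum_powers_coeff_unique:
  fixes a b :: "nat \<Rightarrow> 'a::{finite, field}"
  assumes "n < CARD('a)" and "\<And>x. (\<Sum>k\<le>n. a k * x ^ k) = (\<Sum>k\<le>n. b k * x ^ k)" and "k \<le> n"
  shows "a k = b k"
proof -
  define p where "p c = (\<Sum>k\<le>n. monom (c k) k)" for c :: "nat \<Rightarrow> 'a"
  have poly_p: "poly (p c) x = (\<Sum>k\<le>n. c k * x ^ k)" for c x
    by (simp add: p_def poly_sum poly_monom)
  have degree_p: "degree (p c) < CARD('a)" for c
  proof -
    have "degree (p c) \<le> n"
      unfolding p_def by (intro degree_sum_le) (auto intro: order.trans[OF degree_monom_le])
    with assms(1) show ?thesis
      by simp
  qed
  have "p a = p b"
    by (rule poly_eqI_degree[of UNIV]) (simp_all add: poly_p assms(2) degree_p)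
  then have "coeff (p a) k = coeff (p b) k"
    by simp
  with assms(3) show ?thesis
    by (simp add: p_def coeff_sum)
qed

lemma sum_powers_move_constant_to_top:
  fixes a :: "nat \<Rightarrow> 'a::field"
  assumes "1 \<le> d" and "x ^ d = 1"
  shows "(\<Sum>k\<le>d. a k * x ^ k) = (\<Sum>k\<le>d. (if k = 0 then 0 else if k = d then a d + a 0 else a k) * x ^ k)"
proof -
  have "(if k = 0 then 0 else if k = d then a d + a 0 else a k) * x ^ k =
      a k * x ^ k + (if k = d then a 0 * x ^ d else 0) - (if k = 0 then a 0 else 0)" for k
    using assms(1) by (auto simp: algebra_simps)
  then have "(\<Sum>k\<le>d. (if k = 0 then 0 else if k = d then a d + a 0 else a k) * x ^ k) =
      (\<Sum>k\<le>d. a k * x ^ k) + a 0 * x ^ d - a 0"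
    by (simp add: sum.distrib sum_subtractf)
  with assms(2) show ?thesis
    by simp
qed

lemma sum_powers_coeff_eq_0_if_vanishes_on_nonzero:
  fixes a :: "nat \<Rightarrow> 'a::{finite, field}"
  assumes d: "d = CARD('a) - 1" and vanish: "\<And>x. x \<noteq> 0 \<Longrightarrow> (\<Sum>k\<le>d. a k * x ^ k) = 0"
    and "0 < k" and "k < d"
  shows "a k = 0"
proof -
  define h where "h k = (if k = 0 then 0 else if k = d then a d + a 0 else a k)" for k
  have "(\<Sum>k\<le>d. h k * x ^ k) = (\<Sum>k\<le>d. 0 * x ^ k)" for x
  proof (cases "x = 0")
    case True
    then show ?thesis
      by (auto simp: h_def power_0_left intro!: sum.neutral)
  next
    case False
    then have "x ^ d = 1"
      using d nonzero_pow_card_minus_one by blast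
    with False show ?thesis
      using sum_powers_move_constant_to_top[of d x a] vanish \<open>k < d\<close> by (simp add: h_def)
  qed
  then have "h k = 0"
    using sum_powers_coeff_unique[of d h "\<lambda>_. 0" k] d \<open>k < d\<close> by simp
  with assms(3,4) show ?thesis
    by (simp add: h_def)
qed

text \<open>On nonzero \<open>x\<close> the sum is \<open>x ^ t\<close> times a polynomial of degree at most \<open>d - t < q - t\<close>.\<close>

lemma sum_powers_vanishes_on_nonzero_if_sparse:
  fixes e :: "nat \<Rightarrow> 'a::{finite, field}"
  assumes d: "d = CARD('a) - 1" and "t < CARD('a)" and gap: "\<And>k. 0 < k \<Longrightarrow> k < t \<Longrightarrow> e k = 0"
    and roots: "CARD('a) - t \<le> card {x. x \<noteq> 0 \<and> (\<Sum>k\<le>d. e k * x ^ k) = 0}"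
    and "x \<noteq> 0"
  shows "(\<Sum>k\<le>d. e k * x ^ k) = 0"
proof -
  let ?R = "{x. x \<noteq> 0 \<and> (\<Sum>k\<le>d. e k * x ^ k) = 0}"
  have "1 \<le> d"
    using d two_le_card_field[where 'a='a] by simp
  define h where "h k = (if k = 0 then 0 else if k = d then e d + e 0 else e k)" for k
  define p where "p = (\<Sum>k\<le>d. monom (h k) (k - t))"
  have h_sum: "(\<Sum>k\<le>d. e k * y ^ k) = poly p y * y ^ t" if "y \<noteq> 0" for y
  proof -
    have "y ^ d = 1"
      using d nonzero_pow_card_minus_one that by blast
    have "(\<Sum>k\<le>d. e k * y ^ k) = (\<Sum>k\<le>d. h k * y ^ k)"
      unfolding h_def by (rule sum_powers_move_constant_to_top[OF \<open>1 \<le> d\<close> \<open>y ^ d = 1\<close>])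
    also have "\<dots> = (\<Sum>k\<le>d. h k * y ^ (k - t) * y ^ t)"
    proof (rule sum.cong[OF refl])
      fix k
      show "h k * y ^ k = h k * y ^ (k - t) * y ^ t"
      proof (cases "k < t")
        case True
        with gap have "h k = 0"
          using \<open>t < CARD('a)\<close> d by (auto simp: h_def)
        then show ?thesis
          by simp
      next
        case False
        then show ?thesis
          by (simp add: mult.assoc flip: power_add)
      qed
    qed
    also have "\<dots> = poly p y * y ^ t"
      by (simp add: p_def poly_sum poly_monom sum_distrib_right)
    finally show ?thesis .
  qed
  have "p = 0"
  proof (rule poly_eqI_degree[of ?R])
    show "poly p y = poly 0 y" if "y \<in> ?R" for y
      using that h_sum[of y] by simp
    have "degree p \<le> d - t"
      unfolding p_def by (intro degree_sum_le) (auto intro: order.trans[OF degree_monom_le])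
    with roots d \<open>t < CARD('a)\<close> show "degree p < card ?R"
      by linarith
    with roots show "degree 0 < card ?R"
      by simp
  qed
  with h_sum \<open>x \<noteq> 0\<close> show ?thesis
    by simp
qed

section \<open>The curve along a pencil of lines\<close>

text \<open>
  Read \<open>P\<close> as a polynomial in \<open>m\<close> with coefficients in \<open>b\<close>: \<open>graded P\<close> says exactly that
  \<open>P(m, b) = Q(m, m b)\<close> for a polynomial \<open>Q(x, y)\<close> of total degree at most \<open>degree P\<close>.\<close>

definition graded :: "'a::zero poly poly \<Rightarrow> bool" where
  "graded P \<longleftrightarrow> (\<forall>k. degree (coeff P k) \<le> k)"

lemma graded_mult:
  fixes P Q :: "'a::comm_semiring_1 poly poly"
  assumes "graded P" and "graded Q"
  shows "graded (P * Q)"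
  unfolding graded_def coeff_mult
proof (intro allI degree_sum_le)
  fix k i :: nat
  assume "i \<in> {..k}"
  have "degree (coeff P i * coeff Q (k - i)) \<le> i + (k - i)"
    using assms by (intro order.trans[OF degree_mult_le] add_mono) (simp_all add: graded_def)
  with \<open>i \<in> {..k}\<close> show "degree (coeff P i * coeff Q (k - i)) \<le> k"
    by simp
qed simp

lemma graded_one: "graded 1"
  by (simp add: graded_def)

lemma graded_power: "graded P \<Longrightarrow> graded (P ^ n)"
  by (induction n) (simp_all add: graded_one graded_mult)

lemma graded_sum: "(\<And>i. i \<in> A \<Longrightarrow> graded (f i)) \<Longrightarrow> graded (\<Sum>i\<in>A. f i)"
  unfolding graded_def coeff_sum by (cases "finite A") (auto intro!: degree_sum_le)

lemma graded_const: "graded [:[:c:]:]"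
  by (simp add: graded_def coeff_pCons split: nat.split)

lemma graded_linear: "graded [:[:c:], [:a, b:]:]"
  by (simp add: graded_def coeff_pCons split: nat.split)

lemma hom_eval_on_lines_through_point:
  fixes F :: "nat \<Rightarrow> nat \<Rightarrow> 'a::field"
  obtains c :: "nat \<Rightarrow> 'a poly" where "\<And>k. degree (c k) \<le> k"
    and "\<And>m b. hom_eval d F (w + scale3 m (u + scale3 b r)) = (\<Sum>k\<le>d. poly (c k) b * m ^ k)"
proof -
  obtain w1 w2 w3 a1 a2 a3 b1 b2 b3 where vecs: "w = (w1, w2, w3)" "u = (a1, a2, a3)" "r = (b1, b2, b3)"
    by (cases w, cases u, cases r)
  define X1 where "X1 = [:[:w1:], [:a1, b1:]:]"
  define X2 where "X2 = [:[:w2:], [:a2, b2:]:]"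
  define X3 where "X3 = [:[:w3:], [:a3, b3:]:]"
  define P where "P = (\<Sum>i\<le>d. \<Sum>j\<le>d - i. [:[:F i j:]:] * X1 ^ i * X2 ^ j * X3 ^ (d - i - j))"
  have "graded P"
    unfolding P_def X1_def X2_def X3_def
    by (intro graded_sum graded_mult graded_power graded_const graded_linear)
  have "degree P \<le> d"
  proof -
    have "degree ([:[:F i j:]:] * X1 ^ i * X2 ^ j * X3 ^ (d - i - j)) \<le> d" if "i \<le> d" "j \<le> d - i" for i j
    proof -
      have "degree ([:[:F i j:]:] * X1 ^ i * X2 ^ j * X3 ^ (d - i - j)) \<le> 0 + 1 * i + 1 * j + 1 * (d - i - j)"
        by (intro order.trans[OF degree_mult_le] add_mono order.trans[OF degree_power_le] mult_right_mono)
          (simp_all add: X1_def X2_def X3_def)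
      with that show ?thesis
        by simp
    qed
    then show ?thesis
      unfolding P_def by (intro degree_sum_le) auto
  qed
  have "hom_eval d F (w + scale3 m (u + scale3 b r)) = (\<Sum>k\<le>d. poly (coeff P k) b * m ^ k)" for m b
  proof -
    have linear: "poly (poly [:[:c:], [:a, b':]:] [:m:]) b = c + m * (a + b * b')" for c a b'
      by (simp add: algebra_simps)
    have "hom_eval d F (w + scale3 m (u + scale3 b r)) = poly (poly P [:m:]) b"
      by (simp add: P_def X1_def X2_def X3_def vecs hom_eval_def poly_sum linear mult.assoc
          del: poly_pCons)
    also have "poly P [:m:] = (\<Sum>k\<le>d. coeff P k * [:m:] ^ k)"
      unfolding poly_altdef using \<open>degree P \<le> d\<close>
      by (intro sum.mono_neutral_left) (auto simp: coeff_eq_0)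
    finally show ?thesis
      by (simp add: poly_sum)
  qed
  with \<open>graded P\<close> show thesis
    using that[of "coeff P"] by (simp add: graded_def)
qed

lemma graded_coeff_eq_0_if_vanishes_on_lines:
  fixes c :: "nat \<Rightarrow> 'a::{finite, field} poly"
  assumes d: "d = CARD('a) - 1" and deg: "\<And>k. degree (c k) \<le> k" and "t \<le> d" and "t \<le> card Bs"
    and lines: "\<And>b m. b \<in> Bs \<Longrightarrow> m \<noteq> 0 \<Longrightarrow> (\<Sum>k\<le>d. poly (c k) b * m ^ k) = 0"
    and "0 < k" and "k < t"
  shows "c k = 0"
proof (rule poly_eqI_degree[of Bs])
  show "poly (c k) b = poly 0 b" if "b \<in> Bs" for b
    using sum_powers_coeff_eq_0_if_vanishes_on_nonzero[OF d, of "\<lambda>k. poly (c k) b" k] lines[OF that]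
      assms(3,6,7) by simp
  show "degree (c k) < card Bs"
    using deg[of k] assms(4,7) by linarith
  show "degree 0 < card Bs"
    using assms(4,7) by simp
qed

text \<open>
  The lines through \<open>w\<close> with directions \<open>r + b u\<close> and \<open>u + b\<inverse> r\<close> coincide for \<open>b \<noteq> 0\<close>; this
  transfers the vanishing of low coefficients from the directions \<open>u + b r\<close> to the direction \<open>r\<close>.\<close>

lemma low_coeffs_vanish_on_line_through_point:
  fixes F :: "nat \<Rightarrow> nat \<Rightarrow> 'a::{finite, field}"
  assumes d: "d = CARD('a) - 1" and "t < CARD('a)" and "t \<le> card Bs"
    and lines: "\<And>b m. b \<in> Bs \<Longrightarrow> m \<noteq> 0 \<Longrightarrow> hom_eval d F (w + scale3 m (u + scale3 b r)) = 0"
  obtains e where "\<And>m. hom_eval d F (w + scale3 m r) = (\<Sum>k\<le>d. e k * m ^ k)"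
    and "\<And>k. 0 < k \<Longrightarrow> k < t \<Longrightarrow> e k = 0"
proof -
  obtain c where deg_c: "\<And>k. degree (c k) \<le> k"
    and c: "\<And>m b. hom_eval d F (w + scale3 m (u + scale3 b r)) = (\<Sum>k\<le>d. poly (c k) b * m ^ k)"
    using hom_eval_on_lines_through_point[where d = d and F = F and w = w and u = u and r = r] by blast
  obtain c' where deg_c': "\<And>k. degree (c' k) \<le> k"
    and c': "\<And>m b. hom_eval d F (w + scale3 m (r + scale3 b u)) = (\<Sum>k\<le>d. poly (c' k) b * m ^ k)"
    using hom_eval_on_lines_through_point[where d = d and F = F and w = w and u = r and r = u] by blast
  have "t \<le> d"
    using d assms(2) by simp
  have c'_0: "c' k = 0" if k: "0 < k" "k < t" for k
  proof (rule poly_eqI_degree[of "- {0}"])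
    show "poly (c' k) b = poly 0 b" if "b \<in> - {0}" for b
    proof -
      have "(\<Sum>k\<le>d. poly (c' k) b * m ^ k) = (\<Sum>k\<le>d. (poly (c k) (1 / b) * b ^ k) * m ^ k)" for m
      proof -
        have "w + scale3 m (r + scale3 b u) = w + scale3 (b * m) (u + scale3 (1 / b) r)"
          using that by (cases w; cases r; cases u) (simp add: field_simps)
        then have "(\<Sum>k\<le>d. poly (c' k) b * m ^ k) = (\<Sum>k\<le>d. poly (c k) (1 / b) * (b * m) ^ k)"
          by (simp flip: c c')
        then show ?thesis
          by (simp add: power_mult_distrib mult_ac)
      qed
      then have "poly (c' k) b = poly (c k) (1 / b) * b ^ k"
        using sum_powers_coeff_unique[of d "\<lambda>k. poly (c' k) b" "\<lambda>k. poly (c k) (1 / b) * b ^ k" k]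
          d k \<open>t \<le> d\<close> by simp
      also have "c k = 0"
        using graded_coeff_eq_0_if_vanishes_on_lines[OF d deg_c \<open>t \<le> d\<close> assms(3) _ k] lines c
        by simp
      finally show ?thesis
        by simp
    qed
    have "card (- {0 :: 'a}) = d"
      using d by (simp add: Compl_eq_Diff_UNIV card_Diff_subset)
    then show "degree (c' k) < card (- {0 :: 'a})" and "degree 0 < card (- {0 :: 'a})"
      using deg_c'[of k] k \<open>t \<le> d\<close> by simp_all
  qed
  show thesis
  proof (rule that)
    show "hom_eval d F (w + scale3 m r) = (\<Sum>k\<le>d. poly (c' k) 0 * m ^ k)" for m
      using c'[of m 0] by simp
    show "poly (c' k) 0 = 0" if "0 < k" "k < t" for k
      using c'_0[OF that] by simp
  qed
qed

lemma hom_eval_vanishes_on_line_through_point: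
  fixes F :: "nat \<Rightarrow> nat \<Rightarrow> 'a::{finite, field}"
  assumes d: "d = CARD('a) - 1" and t: "t < CARD('a)" "t \<le> card Bs"
    and "\<And>b m. b \<in> Bs \<Longrightarrow> m \<noteq> 0 \<Longrightarrow> hom_eval d F (w + scale3 m (u + scale3 b r)) = 0"
    and "CARD('a) - t \<le> card {m. m \<noteq> 0 \<and> hom_eval d F (w + scale3 m r) = 0}"
    and "m \<noteq> 0"
  shows "hom_eval d F (w + scale3 m r) = 0"
proof -
  obtain e where e: "\<And>m. hom_eval d F (w + scale3 m r) = (\<Sum>k\<le>d. e k * m ^ k)"
    and gap: "\<And>k. 0 < k \<Longrightarrow> k < t \<Longrightarrow> e k = 0"
    using low_coeffs_vanish_on_line_through_point[OF assms(1-4)] by blast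
  have "CARD('a) - t \<le> card {m. m \<noteq> 0 \<and> (\<Sum>k\<le>d. e k * m ^ k) = 0}"
    using assms(5) unfolding e .
  from sum_powers_vanishes_on_nonzero_if_sparse[OF d t(1) gap this assms(6)] show ?thesis
    unfolding e .
qed

theorem proposition3p8:
  fixes F :: "nat \<Rightarrow> nat \<Rightarrow> 'a::{finite, field}"
    and q t :: nat
    and Q0 :: "('a \<times> 'a \<times> 'a) set"
    and linf l :: "('a \<times> 'a \<times> 'a) set set"
    and Ls :: "('a \<times> 'a \<times> 'a) set set set"
  assumes "card (UNIV :: 'a set) = q" and "q \<ge> 5"
    and "hom_nonzero (q - 1) F"
    and "\<not> has_linear_component (q - 1) F"
    and "card (curve_pts (q - 1) F) = (q - 1)^2"
    and "Q0 \<in> P2 - curve_pts (q - 1) F"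
    and "is_fq_line linf" and "Q0 \<notin> linf"
    and "card Ls = t" and "2 \<le> t" and "t \<le> q - 1"
    and "\<forall>li\<in>Ls. is_fq_line li \<and> Q0 \<in> li \<and> li - ({Q0} \<union> linf) \<subseteq> curve_pts (q - 1) F"
    and "is_fq_line l" and "Q0 \<in> l" and "l \<notin> Ls"
    and "card ((l - linf) \<inter> curve_pts (q - 1) F) \<ge> q - t"
  shows "l - ({Q0} \<union> linf) \<subseteq> curve_pts (q - 1) F"
proof -
  let ?f = "hom_eval (q - 1) F"
  obtain w L where w: "w \<noteq> 0" "Q0 = proj_pt w" and L: "linf = line_of L" and Lw: "dot3 L w \<noteq> 0"
    using assms(6-8) point_off_lineE by blast
  obtain r where r: "r \<noteq> 0" "dot3 L r = 0" "l = line_of (cross3 w r)"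
    using line_through_pointE assms(13,14) w Lw by metis
  obtain l1 where "l1 \<in> Ls"
    using assms(9,10) by fastforce
  then obtain u where u: "dot3 L u = 0" "cross3 u r \<noteq> 0"
    using other_line_through_pointE[OF _ _ w(1) Lw r(1)] assms(12,15) w r(3) by metis
  define Bs where "Bs = {b. \<forall>m. m \<noteq> 0 \<longrightarrow> ?f (w + scale3 m (u + scale3 b r)) = 0}"
  have "t \<le> card Bs"
    using card_lines_through_point_le[OF w(1) Lw u(1) r(2) u(2)] assms(9,12,15) w L r
    by (auto simp: Bs_def)
  moreover have "q - t \<le> card {m. m \<noteq> 0 \<and> ?f (w + scale3 m r) = 0}"
    using card_affine_curve_points_on_line_le[OF Lw r(2,1)] assms(6,16) w L r by fastforce
  ultimately have "\<forall>m. m \<noteq> 0 \<longrightarrow> ?f (w + scale3 m r) = 0"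
    using hom_eval_vanishes_on_line_through_point[of "q - 1" t Bs F w u r] assms(1,2,11)
    by (auto simp: Bs_def)
  then show ?thesis
    using affine_part_of_line_subset_curve_iff[OF Lw r(2,1)] w L r by simp
qed

end
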